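(* Let $\mathcal{F}$ be a frame and $C_s,C_{cut},C_o\subseteq\mathcal{CH}$ such that $C_{cut}$ is an undirected cut between $C_s$ and $C_o$. If there is no disclosure between $C_s$ and $C_{cut}$, then there is no disclosure between $C_s$ and $C_o$.
   Context: A frame $\mathcal{F}$ consists of pairwise disjoint sets $\mathcal{LO}$ (locations), $\mathcal{CH}$ (channels), $\mathcal{D}$ (data). Each channel $c$ either has both a sender $\mathrm{sender}(c)\in\mathcal{LO}$ and recipient $\mathrm{recipient}(c)\in\mathcal{LO}$ (possibly equal), or neither; $\mathrm{chans}(\ell)=\{c:\mathrm{sender}(c)=\ell\text{ or }\mathrm{recipient}(c)=\ell\}$. Each location $\ell$ has a prefix-closed set $\mathrm{traces}(\ell)$ of finite or infinite sequences of labels $(c,v)$, $c\in\mathrm{chans}(\ell)$, $v\in\mathcal{D}$. Events come from a set $E$ with $\mathrm{chan}:E\to\mathcal{CH}$, $\mathrm{msg}:E\to\mathcal{D}$. A system of events $(B,\preceq)$ has $B\subseteq E$ and $\preceq$ a partial order with finitely many predecessors per event; it is an execution ($\in\mathrm{exec}(\mathcal{F})$) iff for every location $\ell$ the events whose channel has $\ell$ as sender or recipient are linearly ordered and, read as the sequence of labels $(\mathrm{chan}(e),\mathrm{msg}(e))$, lie in $\mathrm{traces}(\ell)$. For $C\subseteq\mathcal{CH}$, $\mathcal{B}|_C$ keeps events with channel in $C$ with the restricted order; $\mathrm{lruns}_C$ is the set of $\mathcal{A}|_C$, $\mathcal{A}\in\mathrm{exec}(\mathcal{F})$ ($C$-runs);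 $J_C^{C'}(\mathcal{B})=\{\mathcal{A}|_{C'}:\mathcal{A}\in\mathrm{exec}(\mathcal{F}),\ \mathcal{A}|_C=\mathcal{B}\}$. There is no disclosure from $C$ to $C'$ iff $J_C^{C'}(\mathcal{B})=\mathrm{lruns}_{C'}$ for every $C$-run $\mathcal{B}$; this relation is symmetric, and "no disclosure between $C$ and $C'$" means no disclosure from $C$ to $C'$. An undirected path is a sequence of locations $\ell_0,\dots,\ell_n$ and channels $c_1,\dots,c_n$ with each $c_k$ having endpoints $\ell_{k-1},\ell_k$ in some direction (the path traverses the $c_k$). $C_{cut}$ is an undirected cut between $C_s$ and $C_o$ iff $C_s,C_{cut},C_o$ are pairwise disjoint and every undirected path from an endpoint location of a channel in $C_o$ to an endpoint location of a channel in $C_s$ traverses some channel in $C_{cut}$. *)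

theory Defs
  imports Main
begin

text \<open>Locations, channels and data are distinct type variables
  'lo, 'ch, 'd (hence pairwise disjoint). A channel either has endpoints
  (sender, recipient) or not: ends c = Some (sender c, recipient c) or None.
  Finite or infinite sequences of labels are functions nat => label option
  that are None from some point on (finite) or never None (infinite).\<close>

record ('lo, 'ch, 'd) frame =
  ends   :: "'ch \<Rightarrow> ('lo \<times> 'lo) option"
  traces :: "'lo \<Rightarrow> (nat \<Rightarrow> ('ch \<times> 'd) option) set"

definition chans :: "('lo, 'ch, 'd) frame \<Rightarrow> 'lo \<Rightarrow> 'ch set" where
  "chans F l = {c. \<exists>s r. ends F c = Some (s, r) \<and> (s = l \<or> r = l)}"

definition is_seq :: "(nat \<Rightarrow> 'a option) \<Rightarrow> bool" where
  "is_seq s \<longleftrightarrow> (\<forall>i. s i = None \<longrightarrow> s (Suc i) = None)"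

definition seq_prefix :: "nat \<Rightarrow> (nat \<Rightarrow> 'a option) \<Rightarrow> (nat \<Rightarrow> 'a option)" where
  "seq_prefix k s = (\<lambda>i. if i < k then s i else None)"

definition wf_frame :: "('lo, 'ch, 'd) frame \<Rightarrow> bool" where
  "wf_frame F \<longleftrightarrow> (\<forall>l. \<forall>s\<in>traces F l.
      is_seq s \<and> (\<forall>i c v. s i = Some (c, v) \<longrightarrow> c \<in> chans F l)
      \<and> (\<forall>k. seq_prefix k s \<in> traces F l))"

type_synonym 'e sys = "'e set \<times> ('e \<times> 'e) set"

definition system_of_events :: "'e sys \<Rightarrow> bool" where
  "system_of_events S \<longleftrightarrow> (case S of (B, R) \<Rightarrow>
      R \<subseteq> B \<times> B \<and> (\<forall>e\<in>B. (e, e) \<in> R) \<and> antisym R \<and> trans R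
      \<and> (\<forall>e\<in>B. finite {e'. (e', e) \<in> R}))"

definition loc_events :: "('lo, 'ch, 'd) frame \<Rightarrow> ('e \<Rightarrow> 'ch) \<Rightarrow> 'e sys \<Rightarrow> 'lo \<Rightarrow> 'e set" where
  "loc_events F chan S l = {e \<in> fst S. chan e \<in> chans F l}"

text \<open>The label sequence of a linearly ordered set A of events: position i
  holds the label of the event of A having exactly i strict predecessors in A.\<close>
definition label_seq :: "('e \<Rightarrow> 'ch) \<Rightarrow> ('e \<Rightarrow> 'd) \<Rightarrow> ('e \<times> 'e) set \<Rightarrow> 'e set
    \<Rightarrow> nat \<Rightarrow> ('ch \<times> 'd) option" where
  "label_seq chan msg R A = (\<lambda>i.
     if \<exists>e\<in>A. card {e'\<in>A. (e', e) \<in> R \<and> e' \<noteq> e} = i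
     then Some (let e = (THE e. e \<in> A \<and> card {e'\<in>A. (e', e) \<in> R \<and> e' \<noteq> e} = i)
                in (chan e, msg e))
     else None)"

definition exec :: "('lo, 'ch, 'd) frame \<Rightarrow> ('e \<Rightarrow> 'ch) \<Rightarrow> ('e \<Rightarrow> 'd) \<Rightarrow> 'e sys set" where
  "exec F chan msg = {S. system_of_events S \<and>
     (\<forall>l. let A = loc_events F chan S l in
        (\<forall>e1\<in>A. \<forall>e2\<in>A. (e1, e2) \<in> snd S \<or> (e2, e1) \<in> snd S)
        \<and> label_seq chan msg (snd S) A \<in> traces F l)}"

definition restr :: "('e \<Rightarrow> 'ch) \<Rightarrow> 'e sys \<Rightarrow> 'ch set \<Rightarrow> 'e sys" where
  "restr chan S C = (let B' = {e \<in> fst S. chan e \<in> C} in (B', snd S \<inter> (B' \<times> B')))"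

definition lruns :: "('lo, 'ch, 'd) frame \<Rightarrow> ('e \<Rightarrow> 'ch) \<Rightarrow> ('e \<Rightarrow> 'd) \<Rightarrow> 'ch set \<Rightarrow> 'e sys set" where
  "lruns F chan msg C = {restr chan A C | A. A \<in> exec F chan msg}"

definition J :: "('lo, 'ch, 'd) frame \<Rightarrow> ('e \<Rightarrow> 'ch) \<Rightarrow> ('e \<Rightarrow> 'd) \<Rightarrow> 'ch set \<Rightarrow> 'ch set
    \<Rightarrow> 'e sys \<Rightarrow> 'e sys set" where
  "J F chan msg C C' B = {restr chan A C' | A. A \<in> exec F chan msg \<and> restr chan A C = B}"

definition no_disclosure :: "('lo, 'ch, 'd) frame \<Rightarrow> ('e \<Rightarrow> 'ch) \<Rightarrow> ('e \<Rightarrow> 'd) \<Rightarrow> 'ch set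
    \<Rightarrow> 'ch set \<Rightarrow> bool" where
  "no_disclosure F chan msg C C' \<longleftrightarrow>
     (\<forall>B \<in> lruns F chan msg C. J F chan msg C C' B = lruns F chan msg C')"

definition upath :: "('lo, 'ch, 'd) frame \<Rightarrow> 'lo list \<Rightarrow> 'ch list \<Rightarrow> bool" where
  "upath F ls cs \<longleftrightarrow> length ls = Suc (length cs) \<and>
     (\<forall>k < length cs. ends F (cs ! k) = Some (ls ! k, ls ! Suc k)
                   \<or> ends F (cs ! k) = Some (ls ! Suc k, ls ! k))"

definition endlocs :: "('lo, 'ch, 'd) frame \<Rightarrow> 'ch set \<Rightarrow> 'lo set" where
  "endlocs F C = {l. \<exists>c\<in>C. c \<in> chans F l}"

definition undirected_cut :: "('lo, 'ch, 'd) frame \<Rightarrow> 'ch set \<Rightarrow> 'ch set \<Rightarrow> 'ch set \<Rightarrow> bool" where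
  "undirected_cut F Cs Ccut Co \<longleftrightarrow>
     Cs \<inter> Ccut = {} \<and> Cs \<inter> Co = {} \<and> Ccut \<inter> Co = {} \<and>
     (\<forall>ls cs. upath F ls cs \<and> hd ls \<in> endlocs F Co \<and> last ls \<in> endlocs F Cs
        \<longrightarrow> (\<exists>c\<in>set cs. c \<in> Ccut))"

end

theory Submission
  imports Defs
begin

text \<open>Let P consist of the channels in Co together with all channels outside Ccut that touch a
  location reachable from an endpoint of Co by an undirected path avoiding Ccut. Every location
  then has either no channel in P or only channels in P \<union> Ccut, and the cut property makes Cs
  disjoint from P. Given a Cs-run and an execution A2, no disclosure between Cs and Ccut yields an
  execution A3 producing that Cs-run and agreeing with A2 on Ccut. The events of A2 on P \<union> Ccut
  and those of A3 off P overlap exactly in the common Ccut-events, where both orders coincide;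
  the transitive union of the two orders glues them into an execution that behaves like A2 on Co
  and like A3 on Cs, since every location sees only one of the two halves.\<close>

lemma restr_restr:
  assumes "C \<subseteq> D"
  shows "restr chan (restr chan S D) C = restr chan S C"
  using assms by (cases S) (auto simp: restr_def Let_def)

lemma restr_chans_eq_loc_events:
  "restr chan S (chans F l) =
     (loc_events F chan S l, snd S \<inter> loc_events F chan S l \<times> loc_events F chan S l)"
  by (simp add: restr_def loc_events_def Let_def)

lemma system_of_events_restr:
  assumes "system_of_events S"
  shows "system_of_events (restr chan S C)"
proof -
  obtain B R where S: "S = (B, R)" by (cases S)
  define B' where "B' = {e \<in> B. chan e \<in> C}"
  have "antisym (R \<inter> B' \<times> B')" "trans (R \<inter> B' \<times> B')"
    using assms by (auto simp: S system_of_events_def intro: antisym_subset) (auto simp: trans_def)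
  moreover have "finite {e'. (e', e) \<in> R \<inter> B' \<times> B'}" if "e \<in> B'" for e
    using assms that by (auto simp: S system_of_events_def B'_def intro: finite_subset)
  ultimately show ?thesis
    using assms by (auto simp: S system_of_events_def restr_def Let_def B'_def)
qed

lemma label_seq_cong:
  assumes "R \<inter> A \<times> A = R' \<inter> A \<times> A"
  shows "label_seq chan msg R A = label_seq chan msg R' A"
proof -
  have "{e'\<in>A. (e', e) \<in> R \<and> e' \<noteq> e} = {e'\<in>A. (e', e) \<in> R' \<and> e' \<noteq> e}" if "e \<in> A" for e
    using assms that by blast
  then show ?thesis
    unfolding label_seq_def by (intro ext) (simp cong: conj_cong)
qed

lemma exec_if_locally_exec:
  assumes "system_of_events S"
    and "\<And>l. \<exists>S'\<in>exec F chan msg. restr chan S (chans F l) = restr chan S' (chans F l)"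
  shows "S \<in> exec F chan msg"
  unfolding exec_def
proof (intro CollectI conjI allI assms(1))
  fix l
  obtain S' where S': "S' \<in> exec F chan msg" and eq: "restr chan S (chans F l) = restr chan S' (chans F l)"
    using assms(2) by blast
  define A where "A = loc_events F chan S l"
  have A': "loc_events F chan S' l = A" and R: "snd S \<inter> A \<times> A = snd S' \<inter> A \<times> A"
    using eq unfolding restr_chans_eq_loc_events A_def prod.inject by (elim conjE; simp)+
  have "(\<forall>e1\<in>A. \<forall>e2\<in>A. (e1, e2) \<in> snd S' \<or> (e2, e1) \<in> snd S') \<and> label_seq chan msg (snd S') A \<in> traces F l"
    using S' A' unfolding exec_def Let_def by blast
  with R show "let A = loc_events F chan S l in
      (\<forall>e1\<in>A. \<forall>e2\<in>A. (e1, e2) \<in> snd S \<or> (e2, e1) \<in> snd S) \<and> label_seq chan msg (snd S) A \<in> traces F l"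
    unfolding A_def[symmetric] Let_def label_seq_cong[OF R] by blast
qed

definition glue_rel :: "'a rel \<Rightarrow> 'a rel \<Rightarrow> 'a rel" where
  "glue_rel R2 R3 = R2 \<union> R3 \<union> R2 O R3 \<union> R3 O R2"

lemma glue_rel_mem_cases:
  assumes "(x, y) \<in> glue_rel R2 R3"
  obtains "(x, y) \<in> R2" | "(x, y) \<in> R3"
    | a where "(x, a) \<in> R2" "(a, y) \<in> R3" | a where "(x, a) \<in> R3" "(a, y) \<in> R2"
  using assms unfolding glue_rel_def by blast

context
  fixes R2 R3 :: "'a rel" and E2 E3 :: "'a set"
  assumes field2: "R2 \<subseteq> E2 \<times> E2" and field3: "R3 \<subseteq> E3 \<times> E3"
    and agree: "R2 \<inter> (E2 \<inter> E3) \<times> (E2 \<inter> E3) = R3 \<inter> (E2 \<inter> E3) \<times> (E2 \<inter> E3)"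
    and trans2: "trans R2" and trans3: "trans R3"
begin

lemma glue_rel_restrict_left: "glue_rel R2 R3 \<inter> E2 \<times> E2 = R2"
proof (intro equalityI subsetI)
  fix p assume "p \<in> glue_rel R2 R3 \<inter> E2 \<times> E2"
  then obtain x y where p: "p = (x, y)" "(x, y) \<in> glue_rel R2 R3" "x \<in> E2" "y \<in> E2" by blast
  from p(2) show "p \<in> R2"
    by (cases rule: glue_rel_mem_cases) (use p field2 field3 agree trans2 in \<open>blast dest: transD\<close>)+
qed (use field2 in \<open>auto simp: glue_rel_def\<close>)

lemma glue_rel_restrict_right: "glue_rel R2 R3 \<inter> E3 \<times> E3 = R3"
proof (intro equalityI subsetI)
  fix p assume "p \<in> glue_rel R2 R3 \<inter> E3 \<times> E3"
  then obtain x y where p: "p = (x, y)" "(x, y) \<in> glue_rel R2 R3" "x \<in> E3" "y \<in> E3" by blast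
  from p(2) show "p \<in> R3"
    by (cases rule: glue_rel_mem_cases) (use p field2 field3 agree trans3 in \<open>blast dest: transD\<close>)+
qed (use field3 in \<open>auto simp: glue_rel_def\<close>)

lemma trans_glue_rel: "trans (glue_rel R2 R3)"
proof -
  have c22: "\<And>a b c. (a, b) \<in> R2 \<Longrightarrow> (b, c) \<in> R2 \<Longrightarrow> (a, c) \<in> R2"
    and c33: "\<And>a b c. (a, b) \<in> R3 \<Longrightarrow> (b, c) \<in> R3 \<Longrightarrow> (a, c) \<in> R3"
    using trans2 trans3 by (blast dest: transD)+
  have c323: "(a, d) \<in> R3" if "(a, b) \<in> R3" "(b, c) \<in> R2" "(c, d) \<in> R3" for a b c d
  proof -
    have "(b, c) \<in> R3" using that field2 field3 agree by blast
    with that show ?thesis by (blast intro: c33)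
  qed
  have c232: "(a, d) \<in> R2" if "(a, b) \<in> R2" "(b, c) \<in> R3" "(c, d) \<in> R2" for a b c d
  proof -
    have "(b, c) \<in> R2" using that field2 field3 agree by blast
    with that show ?thesis by (blast intro: c22)
  qed
  show ?thesis
  proof (rule transI)
    fix x y z assume "(x, y) \<in> glue_rel R2 R3" "(y, z) \<in> glue_rel R2 R3"
    then show "(x, z) \<in> glue_rel R2 R3"
      unfolding glue_rel_def
      by (elim UnE relcompEpair; meson c22 c33 c323 c232 relcompI UnI1 UnI2)
  qed
qed

lemma antisym_glue_rel:
  assumes antisym2: "antisym R2" and antisym3: "antisym R3"
  shows "antisym (glue_rel R2 R3)"
proof (rule antisymI)
  let ?G = "glue_rel R2 R3"
  have no_cross_cycle: False
    if uv: "(u, v) \<in> ?G" and vu: "(v, u) \<in> ?G" and u: "u \<in> E2" "u \<notin> E3" and v: "v \<notin> E2" for u v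
  proof -
    have "(u, v) \<notin> R2 \<union> R3 \<union> R3 O R2"
      using u v field2 field3 by blast
    with uv obtain a where ua: "(u, a) \<in> R2" and av: "(a, v) \<in> R3"
      unfolding glue_rel_def by blast
    have "(a, v) \<in> ?G"
      using av unfolding glue_rel_def by blast
    then have "(a, u) \<in> ?G"
      using vu by (rule transD[OF trans_glue_rel])
    moreover have "a \<in> E2" using ua field2 by blast
    ultimately have "(a, u) \<in> ?G \<inter> E2 \<times> E2" using u by blast
    then have "(a, u) \<in> R2" unfolding glue_rel_restrict_left .
    with ua antisym2 have "u = a" by (blast dest: antisymD)
    with av u field3 show False by blast
  qed
  fix x y assume xy: "(x, y) \<in> ?G" and yx: "(y, x) \<in> ?G"
  have "?G \<subseteq> (E2 \<union> E3) \<times> (E2 \<union> E3)"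
    using field2 field3 unfolding glue_rel_def by blast
  with xy have "x \<in> E2 \<union> E3" "y \<in> E2 \<union> E3" by blast+
  then consider "x \<in> E2" "y \<in> E2" | "x \<in> E3" "y \<in> E3"
    | "x \<in> E2" "x \<notin> E3" "y \<notin> E2" | "y \<in> E2" "y \<notin> E3" "x \<notin> E2"
    by blast
  then show "x = y"
  proof cases
    case 1
    then have "(x, y) \<in> ?G \<inter> E2 \<times> E2" "(y, x) \<in> ?G \<inter> E2 \<times> E2" using xy yx by blast+
    then show ?thesis
      unfolding glue_rel_restrict_left by (rule antisymD[OF antisym2])
  next
    case 2
    then have "(x, y) \<in> ?G \<inter> E3 \<times> E3" "(y, x) \<in> ?G \<inter> E3 \<times> E3" using xy yx by blast+
    then show ?thesis
      unfolding glue_rel_restrict_right by (rule antisymD[OF antisym3])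
  qed (use no_cross_cycle xy yx in blast)+
qed

end

lemma finite_pred_glue_rel:
  assumes "\<And>e. finite {x. (x, e) \<in> R2}" and "\<And>e. finite {x. (x, e) \<in> R3}"
  shows "finite {x. (x, e) \<in> glue_rel R2 R3}"
proof (rule finite_subset)
  show "{x. (x, e) \<in> glue_rel R2 R3} \<subseteq> {x. (x, e) \<in> R2} \<union> {x. (x, e) \<in> R3}
      \<union> (\<Union>c\<in>{c. (c, e) \<in> R3}. {x. (x, c) \<in> R2}) \<union> (\<Union>c\<in>{c. (c, e) \<in> R2}. {x. (x, c) \<in> R3})"
    unfolding glue_rel_def by blast
qed (use assms in auto)

lemma system_of_events_finite_pred:
  assumes "system_of_events (B, R)"
  shows "finite {x. (x, e) \<in> R}"
proof (cases "e \<in> B")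
  case False
  then have "{x. (x, e) \<in> R} = {}" using assms by (auto simp: system_of_events_def)
  then show ?thesis by simp
qed (use assms in \<open>simp add: system_of_events_def\<close>)

context
  fixes B2 B3 :: "'e set" and R2 R3 :: "'e rel"
  assumes sys2: "system_of_events (B2, R2)" and sys3: "system_of_events (B3, R3)"
    and agree: "R2 \<inter> (B2 \<inter> B3) \<times> (B2 \<inter> B3) = R3 \<inter> (B2 \<inter> B3) \<times> (B2 \<inter> B3)"
begin

lemma system_of_events_glue: "system_of_events (B2 \<union> B3, glue_rel R2 R3)"
proof -
  have field2: "R2 \<subseteq> B2 \<times> B2" and trans2: "trans R2" and antisym2: "antisym R2"
    and refl2: "\<forall>e\<in>B2. (e, e) \<in> R2"
    using sys2 by (simp_all add: system_of_events_def)
  have field3: "R3 \<subseteq> B3 \<times> B3" and trans3: "trans R3" and antisym3: "antisym R3"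
    and refl3: "\<forall>e\<in>B3. (e, e) \<in> R3"
    using sys3 by (simp_all add: system_of_events_def)
  have "glue_rel R2 R3 \<subseteq> (B2 \<union> B3) \<times> (B2 \<union> B3)" "\<forall>e\<in>B2 \<union> B3. (e, e) \<in> glue_rel R2 R3"
    using field2 field3 refl2 refl3 unfolding glue_rel_def by blast+
  moreover have "finite {x. (x, e) \<in> glue_rel R2 R3}" for e
    using system_of_events_finite_pred[OF sys2] system_of_events_finite_pred[OF sys3]
    by (rule finite_pred_glue_rel)
  ultimately show ?thesis
    unfolding system_of_events_def
    using trans_glue_rel[OF field2 field3 agree trans2 trans3]
      antisym_glue_rel[OF field2 field3 agree trans2 trans3 antisym2 antisym3] by simp
qed

lemma restr_glue_left:
  assumes "{e \<in> B2 \<union> B3. chan e \<in> C} = B2"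
  shows "restr chan (B2 \<union> B3, glue_rel R2 R3) C = (B2, R2)"
  using assms glue_rel_restrict_left[of R2 B2 R3 B3] agree sys2 sys3
  by (simp add: restr_def Let_def system_of_events_def)

lemma restr_glue_right:
  assumes "{e \<in> B2 \<union> B3. chan e \<in> C} = B3"
  shows "restr chan (B2 \<union> B3, glue_rel R2 R3) C = (B3, R3)"
  using assms glue_rel_restrict_right[of R2 B2 R3 B3] agree sys2 sys3
  by (simp add: restr_def Let_def system_of_events_def)

end

lemma restr_eq_common_part:
  assumes "restr chan (B2, R2) C = restr chan (B3, R3) C" and "\<forall>e\<in>B2 \<inter> B3. chan e \<in> C"
  shows "B2 \<inter> B3 = {e \<in> B2. chan e \<in> C}" and "B2 \<inter> B3 = {e \<in> B3. chan e \<in> C}"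
    and "R2 \<inter> (B2 \<inter> B3) \<times> (B2 \<inter> B3) = R3 \<inter> (B2 \<inter> B3) \<times> (B2 \<inter> B3)"
proof -
  have "{e \<in> B2. chan e \<in> C} = {e \<in> B3. chan e \<in> C}
    \<and> R2 \<inter> {e \<in> B2. chan e \<in> C} \<times> {e \<in> B2. chan e \<in> C}
          = R3 \<inter> {e \<in> B3. chan e \<in> C} \<times> {e \<in> B3. chan e \<in> C}"
    using assms(1) unfolding restr_def Let_def fst_conv snd_conv prod.inject .
  then have eq: "{e \<in> B2. chan e \<in> C} = {e \<in> B3. chan e \<in> C}"
    and R: "R2 \<inter> {e \<in> B2. chan e \<in> C} \<times> {e \<in> B2. chan e \<in> C}
          = R3 \<inter> {e \<in> B3. chan e \<in> C} \<times> {e \<in> B3. chan e \<in> C}"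
    by (rule conjunct1, rule conjunct2)
  show "B2 \<inter> B3 = {e \<in> B2. chan e \<in> C}" and "B2 \<inter> B3 = {e \<in> B3. chan e \<in> C}"
    using eq assms(2) by blast+
  then show "R2 \<inter> (B2 \<inter> B3) \<times> (B2 \<inter> B3) = R3 \<inter> (B2 \<inter> B3) \<times> (B2 \<inter> B3)"
    using R by simp
qed

lemma exec_glue:
  assumes A2: "A2 \<in> exec F chan msg" and A3: "A3 \<in> exec F chan msg"
    and disj: "P \<inter> Ccut = {}"
    and separated: "\<And>l. chans F l \<inter> P = {} \<or> chans F l \<subseteq> P \<union> Ccut"
    and agree: "restr chan A2 Ccut = restr chan A3 Ccut"
  obtains A where "A \<in> exec F chan msg"
    and "restr chan A (P \<union> Ccut) = restr chan A2 (P \<union> Ccut)"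
    and "restr chan A (- P) = restr chan A3 (- P)"
proof -
  obtain B2 R2 where S2: "restr chan A2 (P \<union> Ccut) = (B2, R2)" by fastforce
  obtain B3 R3 where S3: "restr chan A3 (- P) = (B3, R3)" by fastforce
  have sys2: "system_of_events (B2, R2)" and sys3: "system_of_events (B3, R3)"
    using A2 A3 system_of_events_restr unfolding exec_def S2[symmetric] S3[symmetric] by blast+
  have chan2: "\<forall>e\<in>B2. chan e \<in> P \<union> Ccut" and chan3: "\<forall>e\<in>B3. chan e \<notin> P"
    using S2 S3 by (auto simp: restr_def Let_def)
  have "Ccut \<subseteq> P \<union> Ccut" "Ccut \<subseteq> - P" using disj by blast+
  then have "restr chan (B2, R2) Ccut = restr chan (B3, R3) Ccut"
    unfolding S2[symmetric] S3[symmetric] using agree by (simp add: restr_restr)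
  from restr_eq_common_part[OF this] chan2 chan3
  have common2: "B2 \<inter> B3 = {e \<in> B2. chan e \<in> Ccut}" and common3: "B2 \<inter> B3 = {e \<in> B3. chan e \<in> Ccut}"
    and common_order: "R2 \<inter> (B2 \<inter> B3) \<times> (B2 \<inter> B3) = R3 \<inter> (B2 \<inter> B3) \<times> (B2 \<inter> B3)"
    by blast+
  define A where "A = (B2 \<union> B3, glue_rel R2 R3)"
  have left: "restr chan A (P \<union> Ccut) = restr chan A2 (P \<union> Ccut)"
    unfolding S2 A_def using chan2 chan3 common3
    by (intro restr_glue_left[OF sys2 sys3 common_order]) blast
  have right: "restr chan A (- P) = restr chan A3 (- P)"
    unfolding S3 A_def using chan2 chan3 common2 disj
    by (intro restr_glue_right[OF sys2 sys3 common_order]) blast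
  have "A \<in> exec F chan msg"
  proof (rule exec_if_locally_exec)
    show "system_of_events A"
      unfolding A_def by (rule system_of_events_glue[OF sys2 sys3 common_order])
    fix l
    from separated[of l] show "\<exists>S'\<in>exec F chan msg. restr chan A (chans F l) = restr chan S' (chans F l)"
    proof
      assume "chans F l \<inter> P = {}"
      then have "chans F l \<subseteq> - P" by blast
      then show ?thesis using A3 right by (metis restr_restr)
    next
      assume "chans F l \<subseteq> P \<union> Ccut"
      then show ?thesis using A2 left by (metis restr_restr)
    qed
  qed
  from this left right show thesis by (rule that)
qed

lemma upath_snoc:
  assumes "upath F ls cs" and "ends F c = Some (last ls, l) \<or> ends F c = Some (l, last ls)"
  shows "upath F (ls @ [l]) (cs @ [c])"
proof -
  have len: "length ls = Suc (length cs)" using assms(1) by (simp add: upath_def)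
  then have "last ls = ls ! length cs" by (cases ls rule: rev_cases) (auto simp: nth_append)
  with assms len show ?thesis
    by (auto simp: upath_def nth_append less_Suc_eq)
qed

definition reachable_avoiding :: "('lo, 'ch, 'd) frame \<Rightarrow> 'ch set \<Rightarrow> 'lo set \<Rightarrow> 'lo set" where
  "reachable_avoiding F C L =
     {l. \<exists>ls cs. upath F ls cs \<and> hd ls \<in> L \<and> last ls = l \<and> set cs \<inter> C = {}}"

lemma reachable_avoiding_start: "l \<in> L \<Longrightarrow> l \<in> reachable_avoiding F C L"
  unfolding reachable_avoiding_def by (rule CollectI, rule exI[of _ "[l]"], rule exI[of _ "[]"])
    (simp add: upath_def)

lemma reachable_avoiding_step:
  assumes l: "l \<in> reachable_avoiding F C L" and "c \<notin> C" and "c \<in> chans F l" and "c \<in> chans F l'"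
  shows "l' \<in> reachable_avoiding F C L"
proof (cases "l' = l")
  case False
  obtain ls cs where p: "upath F ls cs" "hd ls \<in> L" "last ls = l" "set cs \<inter> C = {}"
    using l unfolding reachable_avoiding_def by blast
  have "ls \<noteq> []" using p(1) by (auto simp: upath_def)
  moreover have "ends F c = Some (l, l') \<or> ends F c = Some (l', l)"
    using assms(3,4) False unfolding chans_def by auto
  ultimately have "upath F (ls @ [l']) (cs @ [c]) \<and> hd (ls @ [l']) \<in> L
      \<and> last (ls @ [l']) = l' \<and> set (cs @ [c]) \<inter> C = {}"
    using upath_snoc[OF p(1)] p(2-4) assms(2) by auto
  then show ?thesis unfolding reachable_avoiding_def by blast
qed (use l in simp)

lemma undirected_cut_reachable_avoiding:
  assumes "undirected_cut F Cs Ccut Co"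
  shows "reachable_avoiding F Ccut (endlocs F Co) \<inter> endlocs F Cs = {}"
  using assms unfolding undirected_cut_def reachable_avoiding_def by blast

lemma undirected_cut_separator:
  assumes cut: "undirected_cut F Cs Ccut Co"
  obtains P where "P \<inter> Ccut = {}" and "Co \<subseteq> P" and "Cs \<inter> P = {}"
    and "\<And>l. chans F l \<inter> P = {} \<or> chans F l \<subseteq> P \<union> Ccut"
proof
  define Reach where "Reach = reachable_avoiding F Ccut (endlocs F Co)"
  define P where "P = Co \<union> {c. c \<notin> Ccut \<and> (\<exists>l\<in>Reach. c \<in> chans F l)}"
  have disj: "Cs \<inter> Ccut = {}" "Cs \<inter> Co = {}" "Ccut \<inter> Co = {}"
    using cut by (simp_all add: undirected_cut_def)
  show "P \<inter> Ccut = {}" and "Co \<subseteq> P"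
    using disj unfolding P_def by blast+
  have "Reach \<inter> endlocs F Cs = {}"
    unfolding Reach_def by (rule undirected_cut_reachable_avoiding[OF cut])
  then show "Cs \<inter> P = {}"
    using disj unfolding P_def endlocs_def by blast
  fix l
  have "l \<in> Reach" if c: "c \<in> chans F l" "c \<in> P" for c
  proof (cases "c \<in> Co")
    case True
    then have "l \<in> endlocs F Co" using c(1) unfolding endlocs_def by blast
    then show ?thesis unfolding Reach_def by (rule reachable_avoiding_start)
  next
    case False
    then obtain l' where "l' \<in> Reach" "c \<notin> Ccut" "c \<in> chans F l'"
      using c(2) unfolding P_def by blast
    then show ?thesis
      using c(1) unfolding Reach_def by (rule reachable_avoiding_step)
  qed
  then show "chans F l \<inter> P = {} \<or> chans F l \<subseteq> P \<union> Ccut"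
    unfolding P_def by blast
qed

lemma no_disclosure_through_separator:
  assumes nd: "no_disclosure F chan msg Cs Ccut"
    and disj: "P \<inter> Ccut = {}" and Co: "Co \<subseteq> P" and Cs: "Cs \<inter> P = {}"
    and separated: "\<And>l. chans F l \<inter> P = {} \<or> chans F l \<subseteq> P \<union> Ccut"
  shows "no_disclosure F chan msg Cs Co"
  unfolding no_disclosure_def
proof (intro ballI equalityI subsetI)
  fix Bs D assume Bs: "Bs \<in> lruns F chan msg Cs" and "D \<in> lruns F chan msg Co"
  then obtain A2 where A2: "A2 \<in> exec F chan msg" "D = restr chan A2 Co"
    unfolding lruns_def by blast
  then have "restr chan A2 Ccut \<in> lruns F chan msg Ccut"
    unfolding lruns_def by blast
  then have "restr chan A2 Ccut \<in> J F chan msg Cs Ccut Bs"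
    using nd Bs unfolding no_disclosure_def by blast
  then obtain A3 where A3: "A3 \<in> exec F chan msg" "restr chan A3 Cs = Bs"
    and agree: "restr chan A2 Ccut = restr chan A3 Ccut"
    unfolding J_def by force
  obtain A where A: "A \<in> exec F chan msg"
    and left: "restr chan A (P \<union> Ccut) = restr chan A2 (P \<union> Ccut)"
    and right: "restr chan A (- P) = restr chan A3 (- P)"
    using exec_glue[OF A2(1) A3(1) disj separated agree] .
  have "Co \<subseteq> P \<union> Ccut" "Cs \<subseteq> - P" using Co Cs by blast+
  then have "restr chan A Co = D" "restr chan A Cs = Bs"
    using left right A2(2) A3(2) by (metis restr_restr)+
  with A show "D \<in> J F chan msg Cs Co Bs"
    unfolding J_def by blast
qed (auto simp: J_def lruns_def)

theorem theorem1:
  fixes F :: "('lo, 'ch, 'd) frame"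
    and chan :: "'e \<Rightarrow> 'ch" and msg :: "'e \<Rightarrow> 'd"
    and Cs Ccut Co :: "'ch set"
  assumes "wf_frame F"
    and "undirected_cut F Cs Ccut Co"
    and "no_disclosure F chan msg Cs Ccut"
  shows "no_disclosure F chan msg Cs Co"
proof -
  obtain P where "P \<inter> Ccut = {}" "Co \<subseteq> P" "Cs \<inter> P = {}"
    "\<And>l. chans F l \<inter> P = {} \<or> chans F l \<subseteq> P \<union> Ccut"
    using undirected_cut_separator[OF assms(2)] by blast
  with assms(3) show ?thesis
    by (rule no_disclosure_through_separator)
qed

end
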